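(* Let $\mathbb{A}$ be the structure defined in the context, let $t:A^k\to A$ be a polymorphism of $\mathbb{A}$, and let $i\in\{0,\dots,n\}$. Let $l_a,l_i,l_{i+1},\dots,l_n\in\mathbb{N}_0$ satisfy $m\cdot l_a+l_i+l_{i+1}+\dots+l_n=k$. For $j\in\{1,\dots,m\}$ let $\mathbf{w}_j\in A^k$ be the tuple consisting of $m$ consecutive blocks of length $l_a$, where the $j$-th block consists of $a$'s and every other block consists of $i$'s, followed by $l_i$ copies of $i$, then $l_{i+1}$ copies of $i+1$, ..., then $l_n$ copies of $n$. Suppose $t(\mathbf{w}_j)=i$ for all $j\in\{1,\dots,m\}$. Then $$t(\underbrace{a,\dots,a}_{m\cdot l_a},x_1,\dots,x_{l_i},\underbrace{i+1,\dots,i+1}_{l_{i+1}},\dots,\underbrace{n,\dots,n}_{l_n})\neq a$$ for all $x_1,\dots,x_{l_i}\in\{0,1,\dots,i-1\}$. The same holds if one fixed permutation of the $k$ coordinate positions is applied to all the tuples $\mathbf{w}_1,\dots,\mathbf{w}_m$ and to the tuple in the conclusion.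
   Context: Fix integers $n\ge 0$ and $m\ge 2$. Let $A=\{a,0,1,\dots,n\}$. For $i\in\{0,\dots,n+1\}$ let $A_i=\{a,0,1,\dots,i-1\}$, so $A_0=\{a\}$ and $A_{n+1}=A$. For $i\in\{0,\dots,n\}$ let $S_i\subseteq A^{m+1}$ be the relation $$S_i=\Big(A_i\times\{a,i\}^m\setminus\{(a,i,i,\dots,i)\}\Big)\cup\{(j,j,\dots,j)\in A^{m+1}: i<j\le n\}.$$ Let $\mathbb{A}$ be the relational structure with universe $A$ whose relations are $S_0,\dots,S_n$ (each of arity $m+1$) together with every nonempty subset $X\subseteq A$ as a unary relation. A polymorphism of $\mathbb{A}$ is an operation $t:A^k\to A$ compatible with all these relations, where compatibility with a relation $R$ means that applying $t$ coordinatewise to any $k$ tuples of $R$ yields a tuple of $R$. *)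

theory Defs
  imports Main
begin

datatype elem = Aa | N nat

definition univ :: "nat \<Rightarrow> elem set" where
  "univ n = insert Aa (N ` {..n})"

definition Aset :: "nat \<Rightarrow> elem set" where
  "Aset i = insert Aa (N ` {..<i})"

definition Srel :: "nat \<Rightarrow> nat \<Rightarrow> nat \<Rightarrow> elem list set" where
  "Srel n m i =
     ({r. length r = m + 1 \<and> r ! 0 \<in> Aset i \<and> (\<forall>p\<in>{1..m}. r ! p \<in> {Aa, N i})}
        - {Aa # replicate m (N i)})
     \<union> {replicate (m + 1) (N j) | j. i < j \<and> j \<le> n}"

definition compatible :: "nat \<Rightarrow> nat \<Rightarrow> (elem list \<Rightarrow> elem) \<Rightarrow> elem list set \<Rightarrow> bool" where
  "compatible k ar t R \<longleftrightarrow>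
     (\<forall>rs. length rs = k \<longrightarrow> (\<forall>r\<in>set rs. r \<in> R) \<longrightarrow>
        map (\<lambda>p. t (map (\<lambda>r. r ! p) rs)) [0..<ar] \<in> R)"

definition polymorphism :: "nat \<Rightarrow> nat \<Rightarrow> nat \<Rightarrow> (elem list \<Rightarrow> elem) \<Rightarrow> bool" where
  "polymorphism n m k t \<longleftrightarrow>
     (\<forall>i\<le>n. compatible k (m + 1) t (Srel n m i)) \<and>
     (\<forall>X. X \<noteq> {} \<and> X \<subseteq> univ n \<longrightarrow> compatible k 1 t {[x] | x. x \<in> X})"

definition wtuple :: "nat \<Rightarrow> nat \<Rightarrow> nat \<Rightarrow> nat \<Rightarrow> (nat \<Rightarrow> nat) \<Rightarrow> nat \<Rightarrow> elem list" where
  "wtuple n m i la l j =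
     concat (map (\<lambda>q. if q = j then replicate la Aa else replicate la (N i)) [1..<m + 1])
     @ concat (map (\<lambda>q. replicate (l q) (N q)) [i..<n + 1])"

definition permute_tuple :: "nat \<Rightarrow> (nat \<Rightarrow> nat) \<Rightarrow> elem list \<Rightarrow> elem list" where
  "permute_tuple k \<sigma> u = map (\<lambda>p. u ! \<sigma> p) [0..<k]"

end

theory Submission
  imports Defs
begin

text \<open>Stack the tuple of the conclusion on top of \<open>w\<^sub>1, \<dots>, w\<^sub>m\<close>. Every column of this
  \<open>(m+1) \<times> k\<close> array lies in \<open>S\<^sub>i\<close>: below the \<open>a\<close>-blocks it reads \<open>(a, i, \<dots>, a, \<dots>, i)\<close>,
  below each \<open>x\<^sub>p\<close> it reads \<open>(x, i, \<dots>, i)\<close> with \<open>x < i\<close>, and further right it is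
  constant \<open>(q, \<dots>, q)\<close> with \<open>q > i\<close>. Applying \<open>t\<close> row-wise therefore yields a tuple
  \<open>(t(u), i, \<dots>, i)\<close> of \<open>S\<^sub>i\<close>, and \<open>(a, i, \<dots>, i)\<close> is exactly the tuple removed from \<open>S\<^sub>i\<close>.
  Permuting the coordinates permutes the columns, so it does not matter.\<close>

lemma nth_concat_same_length:
  assumes "\<forall>q\<in>set qs. length (f q) = la" and "d < length qs * la"
  shows "concat (map f qs) ! d = f (qs ! (d div la)) ! (d mod la)"
  using assms
proof (induction qs arbitrary: d)
  case Nil
  then show ?case by simp
next
  case (Cons q qs)
  have lq: "length (f q) = la" using Cons.prems by simp
  show ?case
  proof (cases "d < la")
    case True
    then show ?thesis using lq by (simp add: nth_append)
  next
    case False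
    moreover have "la > 0" using Cons.prems by (cases la) auto
    ultimately have "d div la = Suc ((d - la) div la)" "d mod la = (d - la) mod la"
      by (simp_all add: le_div_geq le_mod_geq)
    moreover have "concat (map f qs) ! (d - la) = f (qs ! ((d - la) div la)) ! ((d - la) mod la)"
      using Cons False by simp
    ultimately show ?thesis using False lq by (simp add: nth_append)
  qed
qed

lemma compatible_map_rows:
  assumes "compatible k ar t R" and "length rows = ar"
    and "\<forall>r\<in>set rows. length r = k"
    and "\<And>c. c < k \<Longrightarrow> map (\<lambda>r. r ! c) rows \<in> R"
  shows "map t rows \<in> R"
proof -
  define cols where "cols = map (\<lambda>c. map (\<lambda>r. r ! c) rows) [0..<k]"
  have "length cols = k" and "\<forall>col\<in>set cols. col \<in> R"
    using assms(4) by (auto simp: cols_def)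
  then have "map (\<lambda>p. t (map (\<lambda>col. col ! p) cols)) [0..<ar] \<in> R"
    using assms(1) unfolding compatible_def by blast
  moreover have "map (\<lambda>p. t (map (\<lambda>col. col ! p) cols)) [0..<ar] = map t rows"
  proof (rule nth_equalityI)
    fix p assume "p < length (map (\<lambda>p. t (map (\<lambda>col. col ! p) cols)) [0..<ar])"
    then have "p < ar" by simp
    moreover from this have "map (\<lambda>col. col ! p) cols = rows ! p"
      using assms(2,3) by (intro nth_equalityI) (auto simp: cols_def)
    ultimately show "map (\<lambda>p. t (map (\<lambda>col. col ! p) cols)) [0..<ar] ! p = map t rows ! p"
      using assms(2) by simp
  qed (use assms(2) in simp)
  ultimately show ?thesis
    by simp
qed

lemma nth_permute_tuple: "c < k \<Longrightarrow> permute_tuple k \<sigma> u ! c = u ! \<sigma> c"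
  by (simp add: permute_tuple_def)

lemma Srel_not_Aa_head: "Aa # replicate m (N i) \<notin> Srel n m i"
  by (auto simp: Srel_def replicate_Suc)

lemma Srel_head_memberI:
  assumes "x \<in> Aset i" and "length r = m" and "set r \<subseteq> {Aa, N i}"
    and "x \<noteq> Aa \<or> Aa \<in> set r"
  shows "x # r \<in> Srel n m i"
proof -
  have "x # r \<noteq> Aa # replicate m (N i)"
    using assms(4) by auto
  moreover have "(x # r) ! p \<in> {Aa, N i}" if "p \<in> {1..m}" for p
  proof -
    have "r ! (p - 1) \<in> set r" using assms(2) that by auto
    then show ?thesis using assms(3) that by (auto simp: nth_Cons')
  qed
  ultimately show ?thesis
    using assms(1,2) unfolding Srel_def by simp
qed

lemma Srel_constant: "i < q \<Longrightarrow> q \<le> n \<Longrightarrow> replicate (m + 1) (N q) \<in> Srel n m i"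
  unfolding Srel_def by blast

lemma length_Aa_blocks:
  "length (concat (map (\<lambda>q. if q = j then replicate la Aa else replicate la (N i)) [1..<m + 1]))
     = m * la"
proof -
  have "(\<lambda>q. length (if q = j then replicate la Aa else replicate la (N i))) = (\<lambda>q. la)"
    by auto
  then show ?thesis
    by (simp add: length_concat o_def sum_list_triv)
qed

lemma nth_Aa_blocks:
  assumes "d < m * la"
  shows "concat (map (\<lambda>q. if q = j then replicate la Aa else replicate la (N i)) [1..<m + 1]) ! d
     = (if j = d div la + 1 then Aa else N i)"
proof -
  have "la > 0"
    using assms by (cases la) auto
  then have "d div la < m" "d mod la < la"
    using assms by (auto simp: less_mult_imp_div_less mult.commute)
  then show ?thesis
    using nth_concat_same_length[where qs = "[1..<m + 1]" and la = la and d = d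
        and f = "\<lambda>q. if q = j then replicate la Aa else replicate la (N i)"] assms
    by (auto simp del: upt_Suc)
qed

lemma length_value_blocks:
  "length (concat (map (\<lambda>q. replicate (l q) (N q)) [a..<b])) = (\<Sum>q=a..<b. l q)"
  by (simp add: length_concat o_def flip: sum_set_upt_conv_sum_list_nat)

lemma column_in_Srel:
  assumes "i \<le> n" and "length xs = l i" and "set xs \<subseteq> N ` {..<i}"
    and "d < m * la + (\<Sum>q=i..n. l q)"
  defines "T \<equiv> concat (map (\<lambda>q. replicate (l q) (N q)) [i+1..<n + 1])"
  shows "(replicate (m * la) Aa @ xs @ T) ! d # map (\<lambda>j. wtuple n m i la l j ! d) [1..<m + 1]
           \<in> Srel n m i"
proof -
  have wtuple_split: "wtuple n m i la l j =
      concat (map (\<lambda>q. if q = j then replicate la Aa else replicate la (N i)) [1..<m + 1])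
      @ replicate (l i) (N i) @ T" for j
    using assms(1) by (simp add: wtuple_def T_def upt_conv_Cons del: upt_Suc)
  have nth_wtuple: "wtuple n m i la l j ! d = (if d < m * la then if j = d div la + 1 then Aa else N i
      else (replicate (l i) (N i) @ T) ! (d - m * la))" for j
    unfolding wtuple_split nth_append[of _ "replicate (l i) (N i) @ T"] length_Aa_blocks
    using nth_Aa_blocks[of d m la j i] by auto
  have "(\<Sum>q=i..n. l q) = l i + length T"
    unfolding sum.atLeast_Suc_atMost[OF assms(1)] T_def length_value_blocks
    by (simp add: atLeastLessThanSuc_atLeastAtMost)
  then consider "d < m * la" | "m * la \<le> d" "d - m * la < l i"
    | "m * la + l i \<le> d" "d - m * la - l i < length T"
    using assms(4) by linarith
  then show ?thesis
  proof cases
    case 1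
    define r where "r = map (\<lambda>j. if j = d div la + 1 then Aa else N i) [1..<m + 1]"
    have "map (\<lambda>j. wtuple n m i la l j ! d) [1..<m + 1] = r"
      using 1 by (simp add: r_def nth_wtuple del: upt_Suc)
    moreover have "d div la + 1 \<in> {1..m}"
      using 1 less_mult_imp_div_less[of d m la] by simp
    then have "Aa \<in> set r"
      unfolding r_def by (force simp del: upt_Suc)
    moreover have "set r \<subseteq> {Aa, N i}" "length r = m"
      by (auto simp: r_def simp del: upt_Suc)
    ultimately show ?thesis
      using 1 by (simp add: nth_append Aset_def Srel_head_memberI del: upt_Suc)
  next
    case 2
    have "map (\<lambda>j. wtuple n m i la l j ! d) [1..<m + 1] = replicate m (N i)"
      using 2 by (simp add: nth_wtuple nth_append map_replicate_const del: upt_Suc)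
    moreover have "xs ! (d - m * la) \<in> N ` {..<i}"
      using 2 assms(2,3) nth_mem by fastforce
    ultimately show ?thesis
      using 2 assms(2) by (auto simp: nth_append Aset_def intro!: Srel_head_memberI)
  next
    case 3
    then have far: "\<not> d < m * la" "\<not> d - m * la < l i"
      by linarith+
    from 3 have "T ! (d - m * la - l i) \<in> set T"
      by simp
    then obtain q where q: "i < q" "q \<le> n" "T ! (d - m * la - l i) = N q"
      unfolding T_def by auto
    have "(replicate (m * la) Aa @ xs @ T) ! d = N q"
      using far q(3) assms(2) by (simp add: nth_append)
    moreover have "map (\<lambda>j. wtuple n m i la l j ! d) [1..<m + 1] = replicate m (N q)"
      using far q(3) assms(2) by (simp add: nth_wtuple nth_append map_replicate_const del: upt_Suc)
    ultimately show ?thesis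
      using Srel_constant[OF q(1,2), of m] by simp
  qed
qed

theorem mainTheorem6:
  fixes n m k i la :: nat and l :: "nat \<Rightarrow> nat" and t :: "elem list \<Rightarrow> elem"
    and \<sigma> :: "nat \<Rightarrow> nat" and xs :: "elem list"
  assumes "m \<ge> 2"
    and "polymorphism n m k t"
    and "i \<le> n"
    and "m * la + (\<Sum>q=i..n. l q) = k"
    and "bij_betw \<sigma> {..<k} {..<k}"
    and "\<And>j. j \<in> {1..m} \<Longrightarrow> t (permute_tuple k \<sigma> (wtuple n m i la l j)) = N i"
    and "length xs = l i"
    and "set xs \<subseteq> N ` {..<i}"
  shows "t (permute_tuple k \<sigma>
           (replicate (m * la) Aa @ xs @ concat (map (\<lambda>q. replicate (l q) (N q)) [i+1..<n + 1])))
         \<noteq> Aa"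
proof
  define u where "u = replicate (m * la) Aa @ xs @ concat (map (\<lambda>q. replicate (l q) (N q)) [i+1..<n + 1])"
  define ws where "ws = map (wtuple n m i la l) [1..<m + 1]"
  define rows where "rows = map (permute_tuple k \<sigma>) (u # ws)"
  assume "t (permute_tuple k \<sigma> u) = Aa"
  moreover have "map t (map (permute_tuple k \<sigma>) ws) = map (\<lambda>_. N i) [1..<m + 1]"
    unfolding ws_def map_map by (rule map_cong) (auto intro: assms(6))
  moreover have "map t rows \<in> Srel n m i"
  proof (rule compatible_map_rows)
    show "compatible k (m + 1) t (Srel n m i)"
      using assms(2,3) by (simp add: polymorphism_def)
    show "map (\<lambda>r. r ! c) rows \<in> Srel n m i" if "c < k" for c
    proof -
      have "\<sigma> c < k"
        using assms(5) that by (auto dest: bij_betwE)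
      then have "map (\<lambda>r. r ! \<sigma> c) (u # ws) \<in> Srel n m i"
        unfolding u_def ws_def using column_in_Srel[of i n xs l "\<sigma> c" m la] assms(3,4,7,8)
        by (simp add: o_def del: upt_Suc)
      then show ?thesis
        unfolding rows_def using that by (simp add: nth_permute_tuple o_def)
    qed
  qed (simp_all add: rows_def ws_def permute_tuple_def)
  ultimately show False
    using Srel_not_Aa_head by (simp add: rows_def map_replicate_const del: upt_Suc)
qed

end
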